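(* Let $R$ be an associative ring with identity and $M$ a left $R$-module which is projective in $\sigma[M]$. Let $\mu\colon\Lambda^{fi}(M)\to\Lambda^{fi}(M)$ be given by $\mu(N)=\sum\{K\in\Lambda^{fi}(M)\mid \mathcal{U}(K)\subseteq\mathcal{U}(N)\}$. Then for $N\in\Lambda^{fi}(M)$, $\mu(N)=N$ if and only if $N$ is semiprime in $M$ or $N=M$.
   Context: $\Lambda^{fi}(M)$ is the set of fully invariant submodules of $M$. For $N,L\leq M$, $N_ML=\sum\{f(N)\mid f\in\mathrm{Hom}_R(M,L)\}$. $LgSpec(M)$ is the set of submodules $P\neq M$ such that for all $N,L\in\Lambda^{fi}(M)$, $N_ML\subseteq P$ implies $N\subseteq P$ or $L\subseteq P$; for $N\in\Lambda^{fi}(M)$, $\mathcal{U}(N)=\{P\in LgSpec(M)\mid N\nsubseteq P\}$. A submodule $N\in\Lambda^{fi}(M)$ with $N\neq M$ is semiprime in $M$ if whenever $K\in\Lambda^{fi}(M)$ and $K_MK\subseteq N$, then $K\subseteq N$. *)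

theory Defs
  imports "HOL-Algebra.Module"
begin

text \<open>HOL-Algebra's locale module requires a commutative ring, so left modules over
  an arbitrary ring with identity are defined here with the same axioms.\<close>

definition lmodule :: "'r ring \<Rightarrow> ('r, 'a) module \<Rightarrow> bool" where
  "lmodule R M \<longleftrightarrow> ring R \<and> abelian_group M \<and>
     (\<forall>a\<in>carrier R. \<forall>x\<in>carrier M. a \<odot>\<^bsub>M\<^esub> x \<in> carrier M) \<and>
     (\<forall>a\<in>carrier R. \<forall>b\<in>carrier R. \<forall>x\<in>carrier M.
        (a \<oplus>\<^bsub>R\<^esub> b) \<odot>\<^bsub>M\<^esub> x = a \<odot>\<^bsub>M\<^esub> x \<oplus>\<^bsub>M\<^esub> b \<odot>\<^bsub>M\<^esub> x) \<and>
     (\<forall>a\<in>carrier R. \<forall>x\<in>carrier M. \<forall>y\<in>carrier M.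
        a \<odot>\<^bsub>M\<^esub> (x \<oplus>\<^bsub>M\<^esub> y) = a \<odot>\<^bsub>M\<^esub> x \<oplus>\<^bsub>M\<^esub> a \<odot>\<^bsub>M\<^esub> y) \<and>
     (\<forall>a\<in>carrier R. \<forall>b\<in>carrier R. \<forall>x\<in>carrier M.
        (a \<otimes>\<^bsub>R\<^esub> b) \<odot>\<^bsub>M\<^esub> x = a \<odot>\<^bsub>M\<^esub> (b \<odot>\<^bsub>M\<^esub> x)) \<and>
     (\<forall>x\<in>carrier M. \<one>\<^bsub>R\<^esub> \<odot>\<^bsub>M\<^esub> x = x)"

definition submod :: "'r ring \<Rightarrow> ('r, 'a) module \<Rightarrow> 'a set \<Rightarrow> bool" where
  "submod R M N \<longleftrightarrow> N \<subseteq> carrier M \<and> \<zero>\<^bsub>M\<^esub> \<in> N \<and>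
     (\<forall>x\<in>N. \<forall>y\<in>N. x \<oplus>\<^bsub>M\<^esub> y \<in> N) \<and>
     (\<forall>a\<in>carrier R. \<forall>x\<in>N. a \<odot>\<^bsub>M\<^esub> x \<in> N)"

text \<open>Submodule generated by a subset S; the sum of a family of submodules is the
  submodule generated by their union.\<close>

definition gen_submod :: "'r ring \<Rightarrow> ('r, 'a) module \<Rightarrow> 'a set \<Rightarrow> 'a set" where
  "gen_submod R M S = \<Inter>{K. submod R M K \<and> S \<subseteq> K}"

definition lhom_on :: "'r ring \<Rightarrow> ('r, 'a) module \<Rightarrow> 'a set \<Rightarrow> ('r, 'b) module \<Rightarrow> ('a \<Rightarrow> 'b) set" where
  "lhom_on R M S M' = {f. (\<forall>x\<in>S. f x \<in> carrier M') \<and>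
     (\<forall>x\<in>S. \<forall>y\<in>S. f (x \<oplus>\<^bsub>M\<^esub> y) = f x \<oplus>\<^bsub>M'\<^esub> f y) \<and>
     (\<forall>a\<in>carrier R. \<forall>x\<in>S. f (a \<odot>\<^bsub>M\<^esub> x) = a \<odot>\<^bsub>M'\<^esub> f x)}"

abbreviation lhom :: "'r ring \<Rightarrow> ('r, 'a) module \<Rightarrow> ('r, 'b) module \<Rightarrow> ('a \<Rightarrow> 'b) set" where
  "lhom R M M' \<equiv> lhom_on R M (carrier M) M'"

definition dsum :: "('r, 'a) module \<Rightarrow> ('r, 'i \<Rightarrow> 'a) module" where
  "dsum M = \<lparr> carrier = {f. (\<forall>i. f i \<in> carrier M) \<and> finite {i. f i \<noteq> \<zero>\<^bsub>M\<^esub>}},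
              mult = (\<lambda>f g. f), one = (\<lambda>i. \<zero>\<^bsub>M\<^esub>),
              zero = (\<lambda>i. \<zero>\<^bsub>M\<^esub>),
              add = (\<lambda>f g i. f i \<oplus>\<^bsub>M\<^esub> g i),
              smult = (\<lambda>a f i. a \<odot>\<^bsub>M\<^esub> f i) \<rparr>"

text \<open>N belongs to sigma[M] iff N is a factor module of a submodule of a direct sum
  M^(Lambda) of copies of M.  The index set is taken inside the carrier type of N
  (a subset of UNIV is covered since we sum over all of UNIV with finite support).\<close>

definition in_sigma :: "'r ring \<Rightarrow> ('r, 'a) module \<Rightarrow> ('r, 'c) module \<Rightarrow> bool" where
  "in_sigma R M N \<longleftrightarrow> lmodule R N \<and>
     (\<exists>U h. submod R (dsum M :: ('r, 'c \<Rightarrow> 'a) module) U \<and>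
            h \<in> lhom_on R (dsum M :: ('r, 'c \<Rightarrow> 'a) module) U N \<and> h ` U = carrier N)"

definition proj_sigma :: "'r ring \<Rightarrow> ('r, 'a) module \<Rightarrow> bool" where
  "proj_sigma R M \<longleftrightarrow>
     (\<forall>(A :: ('r, ('r \<times> 'a) list) module) (B :: ('r, ('r \<times> 'a) list) module).
        in_sigma R M A \<longrightarrow> in_sigma R M B \<longrightarrow>
        (\<forall>g\<in>lhom R A B. g ` carrier A = carrier B \<longrightarrow>
          (\<forall>f\<in>lhom R M B. \<exists>h\<in>lhom R M A. \<forall>x\<in>carrier M. g (h x) = f x)))"

definition fi_submods :: "'r ring \<Rightarrow> ('r, 'a) module \<Rightarrow> 'a set set" where
  "fi_submods R M = {N. submod R M N \<and> (\<forall>f\<in>lhom R M M. f ` N \<subseteq> N)}"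

text \<open>N_M L = sum of f(N) over f in Hom_R(M, L), with Hom_R(M,L) = endomorphisms of M
  with image in L.\<close>

definition mprod :: "'r ring \<Rightarrow> ('r, 'a) module \<Rightarrow> 'a set \<Rightarrow> 'a set \<Rightarrow> 'a set" where
  "mprod R M N L = gen_submod R M (\<Union>{f ` N | f. f \<in> lhom R M M \<and> f ` carrier M \<subseteq> L})"

definition LgSpec :: "'r ring \<Rightarrow> ('r, 'a) module \<Rightarrow> 'a set set" where
  "LgSpec R M = {P. submod R M P \<and> P \<noteq> carrier M \<and>
     (\<forall>N\<in>fi_submods R M. \<forall>L\<in>fi_submods R M.
        mprod R M N L \<subseteq> P \<longrightarrow> N \<subseteq> P \<or> L \<subseteq> P)}"

definition Uopen :: "'r ring \<Rightarrow> ('r, 'a) module \<Rightarrow> 'a set \<Rightarrow> 'a set set" where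
  "Uopen R M N = {P \<in> LgSpec R M. \<not> N \<subseteq> P}"

definition semiprime_in :: "'r ring \<Rightarrow> ('r, 'a) module \<Rightarrow> 'a set \<Rightarrow> bool" where
  "semiprime_in R M N \<longleftrightarrow> N \<in> fi_submods R M \<and> N \<noteq> carrier M \<and>
     (\<forall>K\<in>fi_submods R M. mprod R M K K \<subseteq> N \<longrightarrow> K \<subseteq> N)"

definition mu :: "'r ring \<Rightarrow> ('r, 'a) module \<Rightarrow> 'a set \<Rightarrow> 'a set" where
  "mu R M N = gen_submod R M (\<Union>{K \<in> fi_submods R M. Uopen R M K \<subseteq> Uopen R M N})"

end

theory Submission
  imports Defs
begin

text \<open>
  Write \<open>A \<star> B\<close> for \<open>mprod R M A B\<close> and \<open>K x\<close> for the fully invariant submodule generated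
  by \<open>x\<close>.  Since \<open>K \<star> K \<subseteq> N\<close> forces every point of \<open>LgSpec\<close> outside \<open>K\<close> to lie outside \<open>N\<close>,
  \<open>\<U>(K) \<subseteq> \<U>(N)\<close> for such \<open>K\<close>, so \<open>\<mu>(N) = N\<close> makes \<open>N\<close> semiprime.

  Conversely let \<open>N\<close> be semiprime and \<open>x \<notin> N\<close>.  Semiprimeness yields a sequence \<open>x = x\<^sub>0, x\<^sub>1, \<dots>\<close>
  outside \<open>N\<close> with \<open>x\<^sub>i\<^sub>+\<^sub>1 \<in> K x\<^sub>i \<star> K x\<^sub>i\<close>, and by Zorn some fully invariant \<open>P \<supseteq> N\<close> is
  maximal among those avoiding the sequence.  This \<open>P\<close> lies in \<open>LgSpec\<close>: if \<open>A \<star> L \<subseteq> P\<close> with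
  \<open>A, L \<nsubseteq> P\<close>, maximality puts some \<open>K x\<^sub>k\<close> inside both \<open>A + P\<close> and \<open>L + P\<close>; projectivity of
  \<open>M\<close> in \<open>\<sigma>[M]\<close> lifts every map \<open>M \<rightarrow> L + P\<close> to a map into \<open>L\<close> modulo \<open>P\<close>, whence
  \<open>(A + P) \<star> (L + P) \<subseteq> P\<close> and so \<open>x\<^sub>k\<^sub>+\<^sub>1 \<in> P\<close>.  Thus every \<open>x \<notin> N\<close> is separated from \<open>N\<close> by a
  point of \<open>LgSpec\<close>, which gives \<open>\<mu>(N) \<subseteq> N\<close>.
\<close>

definition msum :: "('r, 'a) module \<Rightarrow> 'a set \<Rightarrow> 'a set \<Rightarrow> 'a set" where
  "msum M A B = {a \<oplus>\<^bsub>M\<^esub> b | a b. a \<in> A \<and> b \<in> B}"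

definition fi_gen :: "'r ring \<Rightarrow> ('r, 'a) module \<Rightarrow> 'a \<Rightarrow> 'a set" where
  "fi_gen R M x = gen_submod R M {f x | f. f \<in> lhom R M M}"

locale lmod =
  fixes R :: "'r ring" and M :: "('r, 'a) module"
  assumes lmodule: "lmodule R M"
begin

sublocale R: ring R
  using lmodule by (simp add: lmodule_def)

sublocale M: abelian_group M
  using lmodule by (simp add: lmodule_def)

lemma smult_closed [simp, intro]:
  "a \<in> carrier R \<Longrightarrow> x \<in> carrier M \<Longrightarrow> a \<odot>\<^bsub>M\<^esub> x \<in> carrier M"
  using lmodule by (simp add: lmodule_def)

lemma smult_l_distr:
  "a \<in> carrier R \<Longrightarrow> b \<in> carrier R \<Longrightarrow> x \<in> carrier M \<Longrightarrow>
   (a \<oplus>\<^bsub>R\<^esub> b) \<odot>\<^bsub>M\<^esub> x = a \<odot>\<^bsub>M\<^esub> x \<oplus>\<^bsub>M\<^esub> b \<odot>\<^bsub>M\<^esub> x"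
  using lmodule by (simp add: lmodule_def)

lemma smult_r_distr:
  "a \<in> carrier R \<Longrightarrow> x \<in> carrier M \<Longrightarrow> y \<in> carrier M \<Longrightarrow>
   a \<odot>\<^bsub>M\<^esub> (x \<oplus>\<^bsub>M\<^esub> y) = a \<odot>\<^bsub>M\<^esub> x \<oplus>\<^bsub>M\<^esub> a \<odot>\<^bsub>M\<^esub> y"
  using lmodule by (simp add: lmodule_def)

lemma smult_assoc1:
  "a \<in> carrier R \<Longrightarrow> b \<in> carrier R \<Longrightarrow> x \<in> carrier M \<Longrightarrow>
   (a \<otimes>\<^bsub>R\<^esub> b) \<odot>\<^bsub>M\<^esub> x = a \<odot>\<^bsub>M\<^esub> (b \<odot>\<^bsub>M\<^esub> x)"
  using lmodule by (simp add: lmodule_def)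

lemma smult_one [simp]: "x \<in> carrier M \<Longrightarrow> \<one>\<^bsub>R\<^esub> \<odot>\<^bsub>M\<^esub> x = x"
  using lmodule by (simp add: lmodule_def)

lemma zero_smult [simp]: "x \<in> carrier M \<Longrightarrow> \<zero>\<^bsub>R\<^esub> \<odot>\<^bsub>M\<^esub> x = \<zero>\<^bsub>M\<^esub>"
  using smult_l_distr[of "\<zero>\<^bsub>R\<^esub>" "\<zero>\<^bsub>R\<^esub>" x] M.add.l_cancel_one' by simp

lemma smult_zero [simp]: "a \<in> carrier R \<Longrightarrow> a \<odot>\<^bsub>M\<^esub> \<zero>\<^bsub>M\<^esub> = \<zero>\<^bsub>M\<^esub>"
  using smult_r_distr[of a "\<zero>\<^bsub>M\<^esub>" "\<zero>\<^bsub>M\<^esub>"] M.add.l_cancel_one' by simp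

lemma minus_one_smult: "x \<in> carrier M \<Longrightarrow> (\<ominus>\<^bsub>R\<^esub> \<one>\<^bsub>R\<^esub>) \<odot>\<^bsub>M\<^esub> x = \<ominus>\<^bsub>M\<^esub> x"
  using smult_l_distr[of "\<ominus>\<^bsub>R\<^esub> \<one>\<^bsub>R\<^esub>" "\<one>\<^bsub>R\<^esub>" x]
  by (simp add: R.l_neg M.minus_equality)

lemma smult_diff:
  assumes a: "a \<in> carrier R" and x: "x \<in> carrier M" and y: "y \<in> carrier M"
  shows "a \<odot>\<^bsub>M\<^esub> (x \<ominus>\<^bsub>M\<^esub> y) = a \<odot>\<^bsub>M\<^esub> x \<ominus>\<^bsub>M\<^esub> a \<odot>\<^bsub>M\<^esub> y"
proof -
  have "a \<odot>\<^bsub>M\<^esub> (\<ominus>\<^bsub>M\<^esub> y) = (a \<otimes>\<^bsub>R\<^esub> (\<ominus>\<^bsub>R\<^esub> \<one>\<^bsub>R\<^esub>)) \<odot>\<^bsub>M\<^esub> y"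
    using a y by (simp add: smult_assoc1 minus_one_smult)
  also have "\<dots> = ((\<ominus>\<^bsub>R\<^esub> \<one>\<^bsub>R\<^esub>) \<otimes>\<^bsub>R\<^esub> a) \<odot>\<^bsub>M\<^esub> y"
    using a by (simp add: R.r_minus R.l_minus)
  also have "\<dots> = \<ominus>\<^bsub>M\<^esub> (a \<odot>\<^bsub>M\<^esub> y)"
    using a y by (simp add: smult_assoc1 minus_one_smult)
  finally show ?thesis
    using a x y by (simp add: M.minus_eq smult_r_distr)
qed

lemma submodD:
  assumes "submod R M N"
  shows "N \<subseteq> carrier M" "\<zero>\<^bsub>M\<^esub> \<in> N"
    "\<And>x y. x \<in> N \<Longrightarrow> y \<in> N \<Longrightarrow> x \<oplus>\<^bsub>M\<^esub> y \<in> N"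
    "\<And>a x. a \<in> carrier R \<Longrightarrow> x \<in> N \<Longrightarrow> a \<odot>\<^bsub>M\<^esub> x \<in> N"
  using assms by (auto simp: submod_def)

lemma submod_minus: "submod R M N \<Longrightarrow> x \<in> N \<Longrightarrow> \<ominus>\<^bsub>M\<^esub> x \<in> N"
  using submodD(4)[of N "\<ominus>\<^bsub>R\<^esub> \<one>\<^bsub>R\<^esub>" x] submodD(1)[of N] by (auto simp: minus_one_smult)

lemma submod_carrier: "submod R M (carrier M)"
  by (auto simp: submod_def)

lemma submod_zero: "submod R M {\<zero>\<^bsub>M\<^esub>}"
  by (auto simp: submod_def)

lemma gen_submod_least: "submod R M K \<Longrightarrow> S \<subseteq> K \<Longrightarrow> gen_submod R M S \<subseteq> K"
  by (auto simp: gen_submod_def)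

lemma gen_submod_upper: "S \<subseteq> gen_submod R M S"
  by (auto simp: gen_submod_def)

lemma submod_gen_submod: "S \<subseteq> carrier M \<Longrightarrow> submod R M (gen_submod R M S)"
  using submod_carrier by (auto simp: submod_def gen_submod_def)

lemma lhomD:
  assumes "f \<in> lhom R M M"
  shows "\<And>x. x \<in> carrier M \<Longrightarrow> f x \<in> carrier M"
    "\<And>x y. x \<in> carrier M \<Longrightarrow> y \<in> carrier M \<Longrightarrow> f (x \<oplus>\<^bsub>M\<^esub> y) = f x \<oplus>\<^bsub>M\<^esub> f y"
    "\<And>a x. a \<in> carrier R \<Longrightarrow> x \<in> carrier M \<Longrightarrow> f (a \<odot>\<^bsub>M\<^esub> x) = a \<odot>\<^bsub>M\<^esub> f x"
  using assms by (auto simp: lhom_on_def)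

lemma lhom_zero: "f \<in> lhom R M M \<Longrightarrow> f \<zero>\<^bsub>M\<^esub> = \<zero>\<^bsub>M\<^esub>"
  using lhomD(3)[of f "\<zero>\<^bsub>R\<^esub>" "\<zero>\<^bsub>M\<^esub>"] lhomD(1)[of f "\<zero>\<^bsub>M\<^esub>"] by simp

lemma lhom_id: "(\<lambda>x. x) \<in> lhom R M M"
  by (auto simp: lhom_on_def)

lemma lhom_comp: "f \<in> lhom R M M \<Longrightarrow> g \<in> lhom R M M \<Longrightarrow> (\<lambda>x. g (f x)) \<in> lhom R M M"
  by (auto simp: lhom_on_def)

lemma lhom_image_gen_submod:
  assumes f: "f \<in> lhom R M M" and S: "S \<subseteq> carrier M"
  shows "f ` gen_submod R M S \<subseteq> gen_submod R M (f ` S)"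
proof -
  have G: "submod R M (gen_submod R M (f ` S))"
    using S lhomD(1)[OF f] by (intro submod_gen_submod) auto
  have "submod R M {x \<in> carrier M. f x \<in> gen_submod R M (f ` S)}"
    using submodD[OF G] lhomD[OF f] lhom_zero[OF f] by (auto simp: submod_def)
  moreover have "S \<subseteq> {x \<in> carrier M. f x \<in> gen_submod R M (f ` S)}"
    using S gen_submod_upper[of "f ` S"] by auto
  ultimately show ?thesis
    using gen_submod_least by blast
qed

section \<open>Fully invariant submodules and their product\<close>

lemma fi_submodsD:
  "N \<in> fi_submods R M \<Longrightarrow> submod R M N"
  "N \<in> fi_submods R M \<Longrightarrow> f \<in> lhom R M M \<Longrightarrow> x \<in> N \<Longrightarrow> f x \<in> N"
  by (auto simp: fi_submods_def)

lemma fi_submods_carrier: "N \<in> fi_submods R M \<Longrightarrow> N \<subseteq> carrier M"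
  using fi_submodsD(1) submodD(1) by blast

lemma fi_submodsI:
  "submod R M N \<Longrightarrow> (\<And>f x. f \<in> lhom R M M \<Longrightarrow> x \<in> N \<Longrightarrow> f x \<in> N) \<Longrightarrow> N \<in> fi_submods R M"
  by (auto simp: fi_submods_def)

lemma gen_submod_fi:
  assumes S: "S \<subseteq> carrier M" and inv: "\<And>f x. f \<in> lhom R M M \<Longrightarrow> x \<in> S \<Longrightarrow> f x \<in> S"
  shows "gen_submod R M S \<in> fi_submods R M"
proof (rule fi_submodsI[OF submod_gen_submod[OF S]])
  fix f x assume f: "f \<in> lhom R M M" and x: "x \<in> gen_submod R M S"
  have "gen_submod R M (f ` S) \<subseteq> gen_submod R M S"
    using inv[OF f] submod_gen_submod[OF S] gen_submod_upper[of S] by (intro gen_submod_least) auto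
  then show "f x \<in> gen_submod R M S"
    using lhom_image_gen_submod[OF f S] x by auto
qed

lemma Union_chain_fi:
  assumes "C \<noteq> {}" and C: "C \<subseteq> fi_submods R M"
    and chain: "\<And>X Y. X \<in> C \<Longrightarrow> Y \<in> C \<Longrightarrow> X \<subseteq> Y \<or> Y \<subseteq> X"
  shows "\<Union>C \<in> fi_submods R M"
proof (rule fi_submodsI)
  have sub: "\<And>X. X \<in> C \<Longrightarrow> submod R M X"
    using C fi_submodsD(1) by blast
  have add: "x \<oplus>\<^bsub>M\<^esub> y \<in> \<Union>C" if "x \<in> X" "y \<in> Y" "X \<in> C" "Y \<in> C" for x y X Y
    using chain[of X Y] that submodD(3)[OF sub[of X]] submodD(3)[OF sub[of Y]] by blast
  show "submod R M (\<Union>C)"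
    unfolding submod_def
  proof (intro conjI ballI)
    show "\<Union>C \<subseteq> carrier M"
      using sub submodD(1) by blast
    obtain X where "X \<in> C"
      using \<open>C \<noteq> {}\<close> by blast
    then show "\<zero>\<^bsub>M\<^esub> \<in> \<Union>C"
      using submodD(2)[OF sub] by blast
    show "x \<oplus>\<^bsub>M\<^esub> y \<in> \<Union>C" if "x \<in> \<Union>C" "y \<in> \<Union>C" for x y
      using that add by blast
    show "a \<odot>\<^bsub>M\<^esub> x \<in> \<Union>C" if "a \<in> carrier R" "x \<in> \<Union>C" for a x
      using that submodD(4)[OF sub] by blast
  qed
  show "f x \<in> \<Union>C" if "f \<in> lhom R M M" "x \<in> \<Union>C" for f x
    using that C fi_submodsD(2) by blast
qed

lemma msum_fi:
  assumes A: "A \<in> fi_submods R M" and B: "B \<in> fi_submods R M"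
  shows "msum M A B \<in> fi_submods R M"
proof (rule fi_submodsI)
  note subA = fi_submodsD(1)[OF A] and subB = fi_submodsD(1)[OF B]
  have carr: "a \<in> carrier M" "b \<in> carrier M" if "a \<in> A" "b \<in> B" for a b
    using that fi_submods_carrier A B by auto
  have add: "(a \<oplus>\<^bsub>M\<^esub> b) \<oplus>\<^bsub>M\<^esub> (a' \<oplus>\<^bsub>M\<^esub> b') = (a \<oplus>\<^bsub>M\<^esub> a') \<oplus>\<^bsub>M\<^esub> (b \<oplus>\<^bsub>M\<^esub> b')"
    if "a \<in> A" "b \<in> B" "a' \<in> A" "b' \<in> B" for a b a' b'
    using that carr by (simp add: M.a_ac)
  show "submod R M (msum M A B)"
    unfolding submod_def msum_def
  proof (intro conjI ballI)
    show "{a \<oplus>\<^bsub>M\<^esub> b |a b. a \<in> A \<and> b \<in> B} \<subseteq> carrier M"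
      using carr by auto
    show "\<zero>\<^bsub>M\<^esub> \<in> {a \<oplus>\<^bsub>M\<^esub> b |a b. a \<in> A \<and> b \<in> B}"
      using submodD(2)[OF subA] submodD(2)[OF subB] by force
    show "x \<oplus>\<^bsub>M\<^esub> y \<in> {a \<oplus>\<^bsub>M\<^esub> b |a b. a \<in> A \<and> b \<in> B}"
      if "x \<in> {a \<oplus>\<^bsub>M\<^esub> b |a b. a \<in> A \<and> b \<in> B}" "y \<in> {a \<oplus>\<^bsub>M\<^esub> b |a b. a \<in> A \<and> b \<in> B}" for x y
      using that add submodD(3)[OF subA] submodD(3)[OF subB] by fastforce
    show "r \<odot>\<^bsub>M\<^esub> x \<in> {a \<oplus>\<^bsub>M\<^esub> b |a b. a \<in> A \<and> b \<in> B}"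
      if "r \<in> carrier R" "x \<in> {a \<oplus>\<^bsub>M\<^esub> b |a b. a \<in> A \<and> b \<in> B}" for r x
      using that carr smult_r_distr submodD(4)[OF subA] submodD(4)[OF subB] by fastforce
  qed
  show "f x \<in> msum M A B" if f: "f \<in> lhom R M M" and "x \<in> msum M A B" for f x
    using that carr lhomD(2)[OF f] fi_submodsD(2)[OF A f] fi_submodsD(2)[OF B f]
    by (fastforce simp: msum_def)
qed

lemma msum_upper1: "submod R M B \<Longrightarrow> A \<subseteq> carrier M \<Longrightarrow> A \<subseteq> msum M A B"
  unfolding msum_def by (force dest: submodD(2))

lemma msum_upper2: "submod R M A \<Longrightarrow> B \<subseteq> carrier M \<Longrightarrow> B \<subseteq> msum M A B"
  unfolding msum_def by (force dest: submodD(2))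

lemma mprod_generators_carrier:
  "N \<subseteq> carrier M \<Longrightarrow> \<Union>{f ` N | f. f \<in> lhom R M M \<and> f ` carrier M \<subseteq> L} \<subseteq> carrier M"
  using lhomD(1) by blast

lemma mprod_memI:
  "f \<in> lhom R M M \<Longrightarrow> f ` carrier M \<subseteq> L \<Longrightarrow> x \<in> N \<Longrightarrow> f x \<in> mprod R M N L"
  unfolding mprod_def by (rule subsetD[OF gen_submod_upper]) blast

lemma mprod_least:
  "submod R M Q \<Longrightarrow> (\<And>f. f \<in> lhom R M M \<Longrightarrow> f ` carrier M \<subseteq> L \<Longrightarrow> f ` N \<subseteq> Q)
   \<Longrightarrow> mprod R M N L \<subseteq> Q"
  unfolding mprod_def by (rule gen_submod_least) blast+

lemma mprod_subset_right: "N \<subseteq> carrier M \<Longrightarrow> submod R M L \<Longrightarrow> mprod R M N L \<subseteq> L"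
  by (rule mprod_least) (auto dest: subsetD)

lemma mprod_mono:
  assumes "N \<subseteq> N'" "L \<subseteq> L'" "N' \<subseteq> carrier M"
  shows "mprod R M N L \<subseteq> mprod R M N' L'"
proof (rule mprod_least)
  show "submod R M (mprod R M N' L')"
    unfolding mprod_def using assms(3) by (intro submod_gen_submod mprod_generators_carrier)
  show "f ` N \<subseteq> mprod R M N' L'" if "f \<in> lhom R M M" "f ` carrier M \<subseteq> L" for f
  proof (rule image_subsetI)
    show "f x \<in> mprod R M N' L'" if "x \<in> N" for x
      using mprod_memI[of f L' x N'] \<open>x \<in> N\<close> \<open>f \<in> lhom R M M\<close> \<open>f ` carrier M \<subseteq> L\<close> assms
      by blast
  qed
qed

lemma fi_gen_fi: "x \<in> carrier M \<Longrightarrow> fi_gen R M x \<in> fi_submods R M"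
  unfolding fi_gen_def
proof (rule gen_submod_fi)
  show "{f x |f. f \<in> lhom R M M} \<subseteq> carrier M" if "x \<in> carrier M"
    using that lhomD(1) by auto
  fix g y assume g: "g \<in> lhom R M M" and "y \<in> {f x |f. f \<in> lhom R M M}"
  then obtain f where "f \<in> lhom R M M" "y = f x"
    by blast
  then show "g y \<in> {f x |f. f \<in> lhom R M M}"
    using lhom_comp[OF _ g] by (intro CollectI exI[of _ "\<lambda>z. g (f z)"]) simp
qed

lemma fi_gen_mem: "x \<in> fi_gen R M x"
proof -
  have "x \<in> {f x |f. f \<in> lhom R M M}"
    using lhom_id by force
  then show ?thesis
    unfolding fi_gen_def by (rule subsetD[OF gen_submod_upper])
qed

lemma fi_gen_least: "Q \<in> fi_submods R M \<Longrightarrow> x \<in> Q \<Longrightarrow> fi_gen R M x \<subseteq> Q"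
  unfolding fi_gen_def
  by (rule gen_submod_least[OF fi_submodsD(1)]) (use fi_submodsD(2) in blast)+

end

section \<open>Factor modules in \<open>\<sigma>[M]\<close> and projectivity\<close>

text \<open>
  The test modules of \<open>proj_sigma\<close> have carriers in \<open>('r \<times> 'a) list\<close>, so the factor module
  \<open>S/P\<close> is realised there: a coset is encoded by a chosen representative.
\<close>

definition qrep :: "('r, 'a) module \<Rightarrow> 'a set \<Rightarrow> 'a \<Rightarrow> 'a" where
  "qrep M P y = (SOME z. z \<in> carrier M \<and> y \<ominus>\<^bsub>M\<^esub> z \<in> P)"

definition qcls :: "('r, 'a) module \<Rightarrow> 'a set \<Rightarrow> 'a \<Rightarrow> ('r \<times> 'a) list" where
  "qcls M P y = [(undefined, qrep M P y)]"

definition qval :: "('r \<times> 'a) list \<Rightarrow> 'a" where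
  "qval x = snd (hd x)"

definition qmod :: "('r, 'a) module \<Rightarrow> 'a set \<Rightarrow> 'a set \<Rightarrow> ('r, ('r \<times> 'a) list) module" where
  "qmod M S P =
     \<lparr>carrier = qcls M P ` S, mult = (\<lambda>x y. x), one = qcls M P \<zero>\<^bsub>M\<^esub>,
      zero = qcls M P \<zero>\<^bsub>M\<^esub>, add = (\<lambda>x y. qcls M P (qval x \<oplus>\<^bsub>M\<^esub> qval y)),
      smult = (\<lambda>a x. qcls M P (a \<odot>\<^bsub>M\<^esub> qval x))\<rparr>"

lemma qmod_simps:
  "carrier (qmod M S P) = qcls M P ` S"
  "zero (qmod M S P) = qcls M P \<zero>\<^bsub>M\<^esub>"
  "add (qmod M S P) x y = qcls M P (qval x \<oplus>\<^bsub>M\<^esub> qval y)"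
  "smult (qmod M S P) a x = qcls M P (a \<odot>\<^bsub>M\<^esub> qval x)"
  by (simp_all add: qmod_def)

lemma qval_qcls [simp]: "qval (qcls M P y) = qrep M P y"
  by (simp add: qval_def qcls_def)

context lmod
begin

context
  fixes P assumes P: "submod R M P"
begin

lemma diff_mem_sym:
  assumes "x \<in> carrier M" "y \<in> carrier M" "x \<ominus>\<^bsub>M\<^esub> y \<in> P"
  shows "y \<ominus>\<^bsub>M\<^esub> x \<in> P"
proof -
  have "\<ominus>\<^bsub>M\<^esub> (x \<ominus>\<^bsub>M\<^esub> y) = y \<ominus>\<^bsub>M\<^esub> x"
    using assms by (simp add: M.minus_eq M.minus_add M.minus_minus M.a_comm)
  then show ?thesis
    using submod_minus[OF P assms(3)] by simp
qed

lemma diff_mem_trans: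
  assumes "x \<in> carrier M" "y \<in> carrier M" "z \<in> carrier M"
    and "x \<ominus>\<^bsub>M\<^esub> y \<in> P" "y \<ominus>\<^bsub>M\<^esub> z \<in> P"
  shows "x \<ominus>\<^bsub>M\<^esub> z \<in> P"
proof -
  have "(x \<ominus>\<^bsub>M\<^esub> y) \<oplus>\<^bsub>M\<^esub> (y \<ominus>\<^bsub>M\<^esub> z) = x \<oplus>\<^bsub>M\<^esub> ((\<ominus>\<^bsub>M\<^esub> y \<oplus>\<^bsub>M\<^esub> y) \<oplus>\<^bsub>M\<^esub> \<ominus>\<^bsub>M\<^esub> z)"
    using assms by (simp add: M.minus_eq M.a_assoc)
  also have "\<dots> = x \<ominus>\<^bsub>M\<^esub> z"
    using assms by (simp add: M.minus_eq M.l_neg)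
  finally show ?thesis
    using submodD(3)[OF P assms(4,5)] by simp
qed

lemma qrep_cong: "y \<in> carrier M \<Longrightarrow> qrep M P y \<in> carrier M \<and> y \<ominus>\<^bsub>M\<^esub> qrep M P y \<in> P"
  unfolding qrep_def by (rule someI[of _ y]) (simp add: M.minus_eq M.r_neg submodD(2)[OF P])

lemma qcls_eq_iff:
  assumes y: "y \<in> carrier M" and z: "z \<in> carrier M"
  shows "qcls M P y = qcls M P z \<longleftrightarrow> y \<ominus>\<^bsub>M\<^esub> z \<in> P"
proof
  assume "qcls M P y = qcls M P z"
  then have "qrep M P y = qrep M P z"
    by (simp add: qcls_def)
  then show "y \<ominus>\<^bsub>M\<^esub> z \<in> P"
    using qrep_cong[OF y] qrep_cong[OF z] diff_mem_trans[OF y _ z] diff_mem_sym[OF z] by auto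
next
  assume yz: "y \<ominus>\<^bsub>M\<^esub> z \<in> P"
  have "w \<in> carrier M \<and> y \<ominus>\<^bsub>M\<^esub> w \<in> P \<longleftrightarrow> w \<in> carrier M \<and> z \<ominus>\<^bsub>M\<^esub> w \<in> P" for w
    using diff_mem_trans[OF y z, of w] diff_mem_trans[OF z y, of w] diff_mem_sym[OF y z yz] yz by blast
  then show "qcls M P y = qcls M P z"
    by (simp add: qcls_def qrep_def)
qed

lemma qmod_add_qcls:
  assumes y: "y \<in> carrier M" and z: "z \<in> carrier M"
  shows "qcls M P y \<oplus>\<^bsub>qmod M S P\<^esub> qcls M P z = qcls M P (y \<oplus>\<^bsub>M\<^esub> z)"
proof -
  let ?y = "qrep M P y" and ?z = "qrep M P z"
  have "(y \<oplus>\<^bsub>M\<^esub> z) \<ominus>\<^bsub>M\<^esub> (?y \<oplus>\<^bsub>M\<^esub> ?z) = (y \<ominus>\<^bsub>M\<^esub> ?y) \<oplus>\<^bsub>M\<^esub> (z \<ominus>\<^bsub>M\<^esub> ?z)"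
    using y z qrep_cong[OF y] qrep_cong[OF z] by (simp add: M.minus_eq M.minus_add M.a_ac)
  then have "(y \<oplus>\<^bsub>M\<^esub> z) \<ominus>\<^bsub>M\<^esub> (?y \<oplus>\<^bsub>M\<^esub> ?z) \<in> P"
    using qrep_cong[OF y] qrep_cong[OF z] submodD(3)[OF P] by simp
  then show ?thesis
    using y z qrep_cong[OF y] qrep_cong[OF z] qcls_eq_iff[of "?y \<oplus>\<^bsub>M\<^esub> ?z" "y \<oplus>\<^bsub>M\<^esub> z"]
      diff_mem_sym[of "y \<oplus>\<^bsub>M\<^esub> z" "?y \<oplus>\<^bsub>M\<^esub> ?z"]
    by (simp add: qmod_simps)
qed

lemma qmod_smult_qcls:
  assumes a: "a \<in> carrier R" and y: "y \<in> carrier M"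
  shows "a \<odot>\<^bsub>qmod M S P\<^esub> qcls M P y = qcls M P (a \<odot>\<^bsub>M\<^esub> y)"
proof -
  let ?y = "qrep M P y"
  have "?y \<ominus>\<^bsub>M\<^esub> y \<in> P"
    using qrep_cong[OF y] diff_mem_sym[OF y] by blast
  then have "a \<odot>\<^bsub>M\<^esub> ?y \<ominus>\<^bsub>M\<^esub> a \<odot>\<^bsub>M\<^esub> y \<in> P"
    using submodD(4)[OF P a] smult_diff[OF a _ y, of ?y] qrep_cong[OF y] by metis
  then show ?thesis
    using a y qrep_cong[OF y] qcls_eq_iff[of "a \<odot>\<^bsub>M\<^esub> ?y" "a \<odot>\<^bsub>M\<^esub> y"] by (simp add: qmod_simps)
qed

end

context
  fixes P S assumes P: "submod R M P" and S: "submod R M S"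
begin

lemma qmod_carrierE:
  assumes "x \<in> carrier (qmod M S P)"
  obtains y where "y \<in> S" "y \<in> carrier M" "x = qcls M P y"
  using assms submodD(1)[OF S] by (auto simp: qmod_simps)

lemma qmod_abelian_group: "abelian_group (qmod M S P)"
proof (rule abelian_groupI)
  note add = qmod_add_qcls[OF P] and Sc = submodD(1)[OF S]
  show "x \<oplus>\<^bsub>qmod M S P\<^esub> y \<in> carrier (qmod M S P)"
    if "x \<in> carrier (qmod M S P)" "y \<in> carrier (qmod M S P)" for x y
    using that submodD(3)[OF S] by (elim qmod_carrierE) (simp add: add qmod_simps(1))
  show "\<zero>\<^bsub>qmod M S P\<^esub> \<in> carrier (qmod M S P)"
    using submodD(2)[OF S] by (simp add: qmod_simps)
  show "x \<oplus>\<^bsub>qmod M S P\<^esub> y \<oplus>\<^bsub>qmod M S P\<^esub> z = x \<oplus>\<^bsub>qmod M S P\<^esub> (y \<oplus>\<^bsub>qmod M S P\<^esub> z)"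
    if "x \<in> carrier (qmod M S P)" "y \<in> carrier (qmod M S P)" "z \<in> carrier (qmod M S P)" for x y z
    using that by (elim qmod_carrierE) (simp add: add M.a_assoc)
  show "x \<oplus>\<^bsub>qmod M S P\<^esub> y = y \<oplus>\<^bsub>qmod M S P\<^esub> x"
    if "x \<in> carrier (qmod M S P)" "y \<in> carrier (qmod M S P)" for x y
    using that by (elim qmod_carrierE) (simp add: add M.a_comm)
  show "\<zero>\<^bsub>qmod M S P\<^esub> \<oplus>\<^bsub>qmod M S P\<^esub> x = x" if "x \<in> carrier (qmod M S P)" for x
    using that by (elim qmod_carrierE) (simp add: qmod_simps(2) add)
  show "\<exists>y\<in>carrier (qmod M S P). y \<oplus>\<^bsub>qmod M S P\<^esub> x = \<zero>\<^bsub>qmod M S P\<^esub>"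
    if "x \<in> carrier (qmod M S P)" for x
  proof -
    obtain y where y: "y \<in> S" "y \<in> carrier M" "x = qcls M P y"
      using \<open>x \<in> carrier (qmod M S P)\<close> by (rule qmod_carrierE)
    then have "qcls M P (\<ominus>\<^bsub>M\<^esub> y) \<oplus>\<^bsub>qmod M S P\<^esub> x = \<zero>\<^bsub>qmod M S P\<^esub>"
      by (simp add: add qmod_simps(2) M.l_neg)
    moreover have "qcls M P (\<ominus>\<^bsub>M\<^esub> y) \<in> carrier (qmod M S P)"
      using submod_minus[OF S y(1)] by (simp add: qmod_simps)
    ultimately show ?thesis
      by blast
  qed
qed

lemma qmod_lmodule: "lmodule R (qmod M S P)"
  unfolding lmodule_def
proof (intro conjI ballI R.ring_axioms qmod_abelian_group)
  note add = qmod_add_qcls[OF P] and smult = qmod_smult_qcls[OF P]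
  show "a \<odot>\<^bsub>qmod M S P\<^esub> x \<in> carrier (qmod M S P)"
    if "a \<in> carrier R" "x \<in> carrier (qmod M S P)" for a x
    using that submodD(4)[OF S] by (elim qmod_carrierE) (simp add: smult qmod_simps(1))
  show "(a \<oplus>\<^bsub>R\<^esub> b) \<odot>\<^bsub>qmod M S P\<^esub> x = a \<odot>\<^bsub>qmod M S P\<^esub> x \<oplus>\<^bsub>qmod M S P\<^esub> b \<odot>\<^bsub>qmod M S P\<^esub> x"
    if "a \<in> carrier R" "b \<in> carrier R" "x \<in> carrier (qmod M S P)" for a b x
    using that by (elim qmod_carrierE) (simp add: add smult smult_l_distr)
  show "a \<odot>\<^bsub>qmod M S P\<^esub> (x \<oplus>\<^bsub>qmod M S P\<^esub> y) = a \<odot>\<^bsub>qmod M S P\<^esub> x \<oplus>\<^bsub>qmod M S P\<^esub> a \<odot>\<^bsub>qmod M S P\<^esub> y"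
    if "a \<in> carrier R" "x \<in> carrier (qmod M S P)" "y \<in> carrier (qmod M S P)" for a x y
    using that by (elim qmod_carrierE) (simp add: add smult smult_r_distr)
  show "(a \<otimes>\<^bsub>R\<^esub> b) \<odot>\<^bsub>qmod M S P\<^esub> x = a \<odot>\<^bsub>qmod M S P\<^esub> (b \<odot>\<^bsub>qmod M S P\<^esub> x)"
    if "a \<in> carrier R" "b \<in> carrier R" "x \<in> carrier (qmod M S P)" for a b x
    using that by (elim qmod_carrierE) (simp add: smult smult_assoc1)
  show "\<one>\<^bsub>R\<^esub> \<odot>\<^bsub>qmod M S P\<^esub> x = x" if "x \<in> carrier (qmod M S P)" for x
    using that by (elim qmod_carrierE) (simp add: smult)
qed

text \<open>\<open>S/P\<close> is the image of \<open>S\<close>, embedded in \<open>M\<^sup>(\<^sup>I\<^sup>)\<close> as the functions supported at \<open>[]\<close>.\<close>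

lemma qmod_in_sigma: "in_sigma R M (qmod M S P)"
proof -
  define U where "U = {u :: ('r \<times> 'a) list \<Rightarrow> 'a. (\<forall>i. i \<noteq> [] \<longrightarrow> u i = \<zero>\<^bsub>M\<^esub>) \<and> u [] \<in> S}"
  define h where "h u = qcls M P (u [])" for u :: "('r \<times> 'a) list \<Rightarrow> 'a"
  have U_carrier: "u i \<in> carrier M" if "u \<in> U" for u i
    using that submodD(1,2)[OF S] by (cases "i = []") (auto simp: U_def)
  have U: "submod R (dsum M) U"
    unfolding submod_def
  proof (intro conjI ballI)
    have "finite {i. u i \<noteq> \<zero>\<^bsub>M\<^esub>}" if "u \<in> U" for u
      using that by (auto simp: U_def intro: finite_subset[of _ "{[]}"])
    then show "U \<subseteq> carrier (dsum M)"
      using U_carrier by (auto simp: dsum_def)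
    show "\<zero>\<^bsub>dsum M\<^esub> \<in> U"
      using submodD(2)[OF S] by (simp add: dsum_def U_def)
    show "u \<oplus>\<^bsub>dsum M\<^esub> v \<in> U" if "u \<in> U" "v \<in> U" for u v
      using that submodD(3)[OF S] by (simp add: dsum_def U_def)
    show "a \<odot>\<^bsub>dsum M\<^esub> u \<in> U" if "a \<in> carrier R" "u \<in> U" for a u
      using that submodD(4)[OF S] by (simp add: dsum_def U_def)
  qed
  have "h \<in> lhom_on R (dsum M) U (qmod M S P)"
    unfolding lhom_on_def
  proof (intro CollectI conjI ballI)
    show "h u \<in> carrier (qmod M S P)" if "u \<in> U" for u
      using that by (simp add: U_def h_def qmod_simps)
    show "h (u \<oplus>\<^bsub>dsum M\<^esub> v) = h u \<oplus>\<^bsub>qmod M S P\<^esub> h v" if "u \<in> U" "v \<in> U" for u v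
      using qmod_add_qcls[OF P U_carrier[OF that(1)] U_carrier[OF that(2)]]
      by (simp add: h_def dsum_def)
    show "h (a \<odot>\<^bsub>dsum M\<^esub> u) = a \<odot>\<^bsub>qmod M S P\<^esub> h u" if "a \<in> carrier R" "u \<in> U" for a u
      using qmod_smult_qcls[OF P that(1) U_carrier[OF that(2)]]
      by (simp add: h_def dsum_def)
  qed
  moreover have "h ` U = carrier (qmod M S P)"
  proof
    show "h ` U \<subseteq> carrier (qmod M S P)"
      by (auto simp: U_def h_def qmod_simps)
    show "carrier (qmod M S P) \<subseteq> h ` U"
    proof
      fix x assume "x \<in> carrier (qmod M S P)"
      then obtain y where "y \<in> S" "x = qcls M P y"
        by (rule qmod_carrierE)
      then have "(\<lambda>i. if i = [] then y else \<zero>\<^bsub>M\<^esub>) \<in> U" "h (\<lambda>i. if i = [] then y else \<zero>\<^bsub>M\<^esub>) = x"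
        by (simp_all add: U_def h_def)
      then show "x \<in> h ` U"
        by blast
    qed
  qed
  ultimately show ?thesis
    unfolding in_sigma_def using qmod_lmodule U by blast
qed

end

lemma qrep_zero [simp]: "y \<in> carrier M \<Longrightarrow> qrep M {\<zero>\<^bsub>M\<^esub>} y = y"
proof -
  assume y: "y \<in> carrier M"
  let ?z = "qrep M {\<zero>\<^bsub>M\<^esub>} y"
  have z: "?z \<in> carrier M" "y \<oplus>\<^bsub>M\<^esub> \<ominus>\<^bsub>M\<^esub> ?z = \<zero>\<^bsub>M\<^esub>"
    using qrep_cong[OF submod_zero y] by (simp_all add: M.minus_eq)
  then have "\<ominus>\<^bsub>M\<^esub> (\<ominus>\<^bsub>M\<^esub> ?z) = y"
    using y by (simp add: M.minus_equality)
  then show ?thesis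
    using z by (simp add: M.minus_minus)
qed

lemma qmod_zero_carrierD:
  assumes B: "submod R M B" and x: "x \<in> carrier (qmod M B {\<zero>\<^bsub>M\<^esub>})"
  shows "qval x \<in> B" "x = qcls M {\<zero>\<^bsub>M\<^esub>} (qval x)"
  using qmod_carrierE[OF submod_zero B x] qrep_zero qval_qcls by metis+

lemma lhom_from_qmod_zero:
  assumes B: "submod R M B" and h: "h \<in> lhom R M (qmod M B {\<zero>\<^bsub>M\<^esub>})"
  shows "(\<lambda>m. qval (h m)) \<in> lhom R M M"
proof -
  note zero = submod_zero and Bc = submodD(1)[OF B]
  have hm: "qval (h m) \<in> B" "h m = qcls M {\<zero>\<^bsub>M\<^esub>} (qval (h m))" if "m \<in> carrier M" for m
    using h that qmod_zero_carrierD[OF B] by (auto simp: lhom_on_def)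
  show ?thesis
    unfolding lhom_on_def
  proof (intro CollectI conjI ballI)
    show "qval (h m) \<in> carrier M" if "m \<in> carrier M" for m
      using hm(1)[OF that] Bc by blast
    show "qval (h (m \<oplus>\<^bsub>M\<^esub> n)) = qval (h m) \<oplus>\<^bsub>M\<^esub> qval (h n)"
      if "m \<in> carrier M" "n \<in> carrier M" for m n
    proof -
      have "h (m \<oplus>\<^bsub>M\<^esub> n) = h m \<oplus>\<^bsub>qmod M B {\<zero>\<^bsub>M\<^esub>}\<^esub> h n"
        using h that by (simp add: lhom_on_def)
      also have "\<dots> = qcls M {\<zero>\<^bsub>M\<^esub>} (qval (h m)) \<oplus>\<^bsub>qmod M B {\<zero>\<^bsub>M\<^esub>}\<^esub> qcls M {\<zero>\<^bsub>M\<^esub>} (qval (h n))"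
        using hm(2)[OF that(1)] hm(2)[OF that(2)] by (rule arg_cong2)
      also have "\<dots> = qcls M {\<zero>\<^bsub>M\<^esub>} (qval (h m) \<oplus>\<^bsub>M\<^esub> qval (h n))"
        using that hm(1) Bc by (intro qmod_add_qcls[OF zero]) auto
      finally have "h (m \<oplus>\<^bsub>M\<^esub> n) = qcls M {\<zero>\<^bsub>M\<^esub>} (qval (h m) \<oplus>\<^bsub>M\<^esub> qval (h n))" .
      then show ?thesis
        using that hm(1) Bc submodD(3,4)[OF B] by (simp add: subsetD)
    qed
    show "qval (h (a \<odot>\<^bsub>M\<^esub> m)) = a \<odot>\<^bsub>M\<^esub> qval (h m)"
      if "a \<in> carrier R" "m \<in> carrier M" for a m
    proof -
      have "h (a \<odot>\<^bsub>M\<^esub> m) = a \<odot>\<^bsub>qmod M B {\<zero>\<^bsub>M\<^esub>}\<^esub> h m"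
        using h that by (simp add: lhom_on_def)
      also have "\<dots> = a \<odot>\<^bsub>qmod M B {\<zero>\<^bsub>M\<^esub>}\<^esub> qcls M {\<zero>\<^bsub>M\<^esub>} (qval (h m))"
        using hm(2)[OF that(2)] by (rule arg_cong)
      also have "\<dots> = qcls M {\<zero>\<^bsub>M\<^esub>} (a \<odot>\<^bsub>M\<^esub> qval (h m))"
        using that hm(1) Bc by (intro qmod_smult_qcls[OF zero]) auto
      finally have "h (a \<odot>\<^bsub>M\<^esub> m) = qcls M {\<zero>\<^bsub>M\<^esub>} (a \<odot>\<^bsub>M\<^esub> qval (h m))" .
      then show ?thesis
        using that hm(1) Bc submodD(3,4)[OF B] by (simp add: subsetD)
    qed
  qed
qed

context
  fixes B P assumes B: "submod R M B" and P: "submod R M P"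
begin

lemma qmod_projection:
  "(\<lambda>x. qcls M P (qval x)) \<in> lhom R (qmod M B {\<zero>\<^bsub>M\<^esub>}) (qmod M B P)"
  "(\<lambda>x. qcls M P (qval x)) ` carrier (qmod M B {\<zero>\<^bsub>M\<^esub>}) = carrier (qmod M B P)"
proof -
  note zero = submod_zero and Bc = submodD(1)[OF B]
  show "(\<lambda>x. qcls M P (qval x)) \<in> lhom R (qmod M B {\<zero>\<^bsub>M\<^esub>}) (qmod M B P)"
    unfolding lhom_on_def
  proof (intro CollectI conjI ballI)
    show "qcls M P (qval x) \<in> carrier (qmod M B P)" if "x \<in> carrier (qmod M B {\<zero>\<^bsub>M\<^esub>})" for x
      using qmod_zero_carrierD(1)[OF B that] by (simp add: qmod_simps)
    show "qcls M P (qval (x \<oplus>\<^bsub>qmod M B {\<zero>\<^bsub>M\<^esub>}\<^esub> y)) =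
        qcls M P (qval x) \<oplus>\<^bsub>qmod M B P\<^esub> qcls M P (qval y)"
      if "x \<in> carrier (qmod M B {\<zero>\<^bsub>M\<^esub>})" "y \<in> carrier (qmod M B {\<zero>\<^bsub>M\<^esub>})" for x y
      using that Bc submodD(3)[OF B] qrep_zero
      by (elim qmod_carrierE[OF zero B]) (simp add: qmod_add_qcls[OF zero] qmod_add_qcls[OF P] subsetD)
    show "qcls M P (qval (a \<odot>\<^bsub>qmod M B {\<zero>\<^bsub>M\<^esub>}\<^esub> x)) = a \<odot>\<^bsub>qmod M B P\<^esub> qcls M P (qval x)"
      if "a \<in> carrier R" "x \<in> carrier (qmod M B {\<zero>\<^bsub>M\<^esub>})" for a x
      using that Bc submodD(4)[OF B] qrep_zero
      by (elim qmod_carrierE[OF zero B]) (simp add: qmod_smult_qcls[OF zero] qmod_smult_qcls[OF P] subsetD)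
  qed
  have "(\<lambda>x. qcls M P (qval x)) ` qcls M {\<zero>\<^bsub>M\<^esub>} ` B = qcls M P ` B"
    using Bc by (force simp: image_image)
  then show "(\<lambda>x. qcls M P (qval x)) ` carrier (qmod M B {\<zero>\<^bsub>M\<^esub>}) = carrier (qmod M B P)"
    by (simp add: qmod_simps)
qed

lemma lhom_qcls_comp:
  assumes f: "f \<in> lhom R M M" and f_image: "f ` carrier M \<subseteq> msum M B P"
  shows "(\<lambda>m. qcls M P (f m)) \<in> lhom R M (qmod M B P)"
  unfolding lhom_on_def
proof (intro CollectI conjI ballI)
  show "qcls M P (f m) \<in> carrier (qmod M B P)" if "m \<in> carrier M" for m
  proof -
    obtain b p where bp: "f m = b \<oplus>\<^bsub>M\<^esub> p" "b \<in> B" "p \<in> P"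
      using f_image \<open>m \<in> carrier M\<close> by (auto simp: msum_def)
    have "b \<in> carrier M" "p \<in> carrier M"
      using bp submodD(1)[OF B] submodD(1)[OF P] by auto
    then have "(b \<oplus>\<^bsub>M\<^esub> p) \<ominus>\<^bsub>M\<^esub> b = p"
      using M.a_comm[of "b \<oplus>\<^bsub>M\<^esub> p" "\<ominus>\<^bsub>M\<^esub> b"] by (simp add: M.minus_eq M.r_neg1)
    then have "qcls M P (f m) = qcls M P b"
      using bp \<open>b \<in> carrier M\<close> \<open>p \<in> carrier M\<close> qcls_eq_iff[OF P, of "b \<oplus>\<^bsub>M\<^esub> p" b] by simp
    then show ?thesis
      using bp by (simp add: qmod_simps)
  qed
  show "qcls M P (f (m \<oplus>\<^bsub>M\<^esub> n)) = qcls M P (f m) \<oplus>\<^bsub>qmod M B P\<^esub> qcls M P (f n)"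
    if "m \<in> carrier M" "n \<in> carrier M" for m n
    using that lhomD[OF f] by (simp add: qmod_add_qcls[OF P])
  show "qcls M P (f (a \<odot>\<^bsub>M\<^esub> m)) = a \<odot>\<^bsub>qmod M B P\<^esub> qcls M P (f m)"
    if "a \<in> carrier R" "m \<in> carrier M" for a m
    using that lhomD[OF f] by (simp add: qmod_smult_qcls[OF P])
qed

end

lemma lift_modulo:
  assumes proj: "proj_sigma R M" and B: "submod R M B" and P: "submod R M P"
    and f: "f \<in> lhom R M M" and f_image: "f ` carrier M \<subseteq> msum M B P"
  obtains g where "g \<in> lhom R M M" "g ` carrier M \<subseteq> B" "\<And>m. m \<in> carrier M \<Longrightarrow> f m \<ominus>\<^bsub>M\<^esub> g m \<in> P"
proof -
  obtain h where h: "h \<in> lhom R M (qmod M B {\<zero>\<^bsub>M\<^esub>})"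
    and hf: "\<And>m. m \<in> carrier M \<Longrightarrow> qcls M P (qval (h m)) = qcls M P (f m)"
    using proj[unfolded proj_sigma_def, rule_format, OF qmod_in_sigma[OF submod_zero B]
        qmod_in_sigma[OF P B] qmod_projection[OF B P] lhom_qcls_comp[OF B P f f_image]]
    by blast
  have hB: "qval (h m) \<in> B" if "m \<in> carrier M" for m
    using h that qmod_zero_carrierD(1)[OF B] by (auto simp: lhom_on_def)
  show thesis
  proof
    show "(\<lambda>m. qval (h m)) \<in> lhom R M M"
      by (rule lhom_from_qmod_zero[OF B h])
    show "(\<lambda>m. qval (h m)) ` carrier M \<subseteq> B"
      using hB by blast
    show "f m \<ominus>\<^bsub>M\<^esub> qval (h m) \<in> P" if "m \<in> carrier M" for m
    proof -
      have "qval (h m) \<in> carrier M"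
        using hB[OF that] submodD(1)[OF B] by blast
      then show ?thesis
        using hf[OF that] qcls_eq_iff[OF P lhomD(1)[OF f that]] by metis
    qed
  qed
qed

lemma msum_mprod_subset:
  assumes proj: "proj_sigma R M" and A: "A \<in> fi_submods R M" and L: "L \<in> fi_submods R M"
    and P: "P \<in> fi_submods R M" and AL: "mprod R M A L \<subseteq> P"
  shows "mprod R M (msum M A P) (msum M L P) \<subseteq> P"
proof (rule mprod_least)
  note Pc = fi_submods_carrier[OF P] and Psub = fi_submodsD(1)[OF P]
  show "submod R M P"
    by (rule Psub)
  fix f assume f: "f \<in> lhom R M M" and f_image: "f ` carrier M \<subseteq> msum M L P"
  obtain g where g: "g \<in> lhom R M M" "g ` carrier M \<subseteq> L"
    and fg: "\<And>m. m \<in> carrier M \<Longrightarrow> f m \<ominus>\<^bsub>M\<^esub> g m \<in> P"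
    using lift_modulo[OF proj fi_submodsD(1)[OF L] Psub f f_image] by blast
  show "f ` msum M A P \<subseteq> P"
  proof (rule image_subsetI)
    fix y assume "y \<in> msum M A P"
    then obtain a p where y: "y = a \<oplus>\<^bsub>M\<^esub> p" and a: "a \<in> A" and p: "p \<in> P"
      by (auto simp: msum_def)
    have ac: "a \<in> carrier M" and pc: "p \<in> carrier M"
      using a p fi_submods_carrier[OF A] Pc by auto
    have "g a \<in> P"
      using mprod_memI[OF g a] AL by blast
    then have "(f a \<ominus>\<^bsub>M\<^esub> g a) \<oplus>\<^bsub>M\<^esub> g a \<in> P"
      using submodD(3)[OF Psub fg[OF ac]] by blast
    moreover have "(f a \<ominus>\<^bsub>M\<^esub> g a) \<oplus>\<^bsub>M\<^esub> g a = f a"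
      using lhomD(1)[OF f ac] lhomD(1)[OF g(1) ac] by (simp add: M.minus_eq M.a_assoc M.l_neg)
    ultimately show "f y \<in> P"
      using y lhomD(2)[OF f ac pc] submodD(3)[OF Psub] fi_submodsD(2)[OF P f p] by simp
  qed
qed

section \<open>Points of \<open>LgSpec\<close> above a semiprime submodule\<close>

lemma semiprime_square_sequence:
  assumes sp: "semiprime_in R M N" and x: "x \<in> carrier M" "x \<notin> N"
  obtains xs where "xs 0 = x" "\<And>i. xs i \<in> carrier M" "\<And>i. xs i \<notin> N"
    "\<And>i. xs (Suc i) \<in> mprod R M (fi_gen R M (xs i)) (fi_gen R M (xs i))"
proof -
  have step: "\<exists>z. (z \<in> carrier M \<and> z \<notin> N) \<and> z \<in> mprod R M (fi_gen R M y) (fi_gen R M y)"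
    if y: "y \<in> carrier M" "y \<notin> N" for y
  proof -
    have K: "fi_gen R M y \<in> fi_submods R M"
      by (rule fi_gen_fi[OF y(1)])
    then have "\<not> mprod R M (fi_gen R M y) (fi_gen R M y) \<subseteq> N"
      using sp fi_gen_mem[of y] y(2) by (auto simp: semiprime_in_def)
    moreover have "mprod R M (fi_gen R M y) (fi_gen R M y) \<subseteq> carrier M"
      using mprod_subset_right[OF fi_submods_carrier[OF K] fi_submodsD(1)[OF K]]
        fi_submods_carrier[OF K] by blast
    ultimately show ?thesis
      by blast
  qed
  have "\<exists>xs. \<forall>n. (xs n \<in> carrier M \<and> xs n \<notin> N \<and> (n = 0 \<longrightarrow> xs n = x)) \<and>
      xs (Suc n) \<in> mprod R M (fi_gen R M (xs n)) (fi_gen R M (xs n))"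
    by (rule dependent_nat_choice) (use x step in auto)
  then show thesis
    using that by blast
qed

lemma maximal_fi_avoiding:
  assumes N: "N \<in> fi_submods R M" and NX: "N \<inter> X = {}"
  obtains P where "P \<in> fi_submods R M" "N \<subseteq> P" "P \<inter> X = {}"
    "\<And>Q. Q \<in> fi_submods R M \<Longrightarrow> P \<subseteq> Q \<Longrightarrow> Q \<inter> X = {} \<Longrightarrow> Q = P"
proof -
  let ?F = "{Q \<in> fi_submods R M. N \<subseteq> Q \<and> Q \<inter> X = {}}"
  have "\<exists>P\<in>?F. \<forall>Q\<in>?F. P \<subseteq> Q \<longrightarrow> Q = P"
  proof (rule subset_Zorn_nonempty)
    show "?F \<noteq> {}"
      using N NX by blast
    show "\<Union>C \<in> ?F" if "C \<noteq> {}" "subset.chain ?F C" for C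
    proof -
      have C: "C \<subseteq> ?F" "\<And>A B. A \<in> C \<Longrightarrow> B \<in> C \<Longrightarrow> A \<subseteq> B \<or> B \<subseteq> A"
        using that(2) unfolding subset_chain_def by blast+
      have "\<Union>C \<in> fi_submods R M"
        using C by (intro Union_chain_fi[OF that(1)]) blast+
      moreover have "N \<subseteq> \<Union>C" "\<Union>C \<inter> X = {}"
        using C(1) that(1) by blast+
      ultimately show ?thesis
        by blast
    qed
  qed
  then obtain P where P: "P \<in> ?F" and P_max: "\<forall>Q\<in>?F. P \<subseteq> Q \<longrightarrow> Q = P"
    by (elim bexE)
  show thesis
  proof (rule that)
    show "P \<in> fi_submods R M" "N \<subseteq> P" "P \<inter> X = {}"
      using P by simp_all
    show "Q = P" if "Q \<in> fi_submods R M" "P \<subseteq> Q" "Q \<inter> X = {}" for Q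
      using P_max that P by blast
  qed
qed

lemma square_sequence_maximal_LgSpec:
  assumes proj: "proj_sigma R M"
    and xs: "\<And>i. xs i \<in> carrier M"
      "\<And>i. xs (Suc i) \<in> mprod R M (fi_gen R M (xs i)) (fi_gen R M (xs i))"
    and P: "P \<in> fi_submods R M" "\<And>i. xs i \<notin> P"
    and P_max: "\<And>Q. Q \<in> fi_submods R M \<Longrightarrow> P \<subseteq> Q \<Longrightarrow> (\<And>i. xs i \<notin> Q) \<Longrightarrow> Q = P"
  shows "P \<in> LgSpec R M"
proof -
  define K where "K i = fi_gen R M (xs i)" for i
  have K: "K i \<in> fi_submods R M" for i
    unfolding K_def by (rule fi_gen_fi[OF xs(1)])
  have "K (Suc i) \<subseteq> K i" for i
  proof -
    have "mprod R M (K i) (K i) \<subseteq> K i"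
      using mprod_subset_right[OF fi_submods_carrier[OF K] fi_submodsD(1)[OF K]] .
    then show ?thesis
      using xs(2)[of i] K fi_gen_least unfolding K_def by blast
  qed
  then have K_antimono: "i \<le> j \<Longrightarrow> K j \<subseteq> K i" for i j
    by (rule lift_Suc_antimono_le)
  have K_in_msum: "\<exists>i. K i \<subseteq> msum M A P" if A: "A \<in> fi_submods R M" "\<not> A \<subseteq> P" for A
  proof -
    have AP: "msum M A P \<in> fi_submods R M"
      by (rule msum_fi[OF A(1) P(1)])
    have "P \<subseteq> msum M A P" "A \<subseteq> msum M A P"
      using msum_upper1 msum_upper2 fi_submodsD(1) fi_submods_carrier A(1) P(1) by auto
    then obtain i where "xs i \<in> msum M A P"
      using P_max[OF AP] A(2) by blast
    then show ?thesis
      unfolding K_def using fi_gen_least[OF AP] by blast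
  qed
  have "A \<subseteq> P \<or> L \<subseteq> P"
    if A: "A \<in> fi_submods R M" and L: "L \<in> fi_submods R M" and AL: "mprod R M A L \<subseteq> P" for A L
  proof (rule ccontr)
    assume "\<not> (A \<subseteq> P \<or> L \<subseteq> P)"
    then obtain i j where "K i \<subseteq> msum M A P" "K j \<subseteq> msum M L P"
      using K_in_msum A L by blast
    then have "K (max i j) \<subseteq> msum M A P" "K (max i j) \<subseteq> msum M L P"
      using K_antimono[of i "max i j"] K_antimono[of j "max i j"] by auto
    then have "mprod R M (K (max i j)) (K (max i j)) \<subseteq> P"
      using mprod_mono[of "K (max i j)" "msum M A P" "K (max i j)" "msum M L P"]
        msum_mprod_subset[OF proj A L P(1) AL] fi_submods_carrier[OF msum_fi[OF A P(1)]]
      by blast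
    then show False
      using xs(2) P(2) unfolding K_def by blast
  qed
  moreover have "P \<noteq> carrier M"
    using xs(1)[of 0] P(2)[of 0] by blast
  ultimately show ?thesis
    unfolding LgSpec_def using fi_submodsD(1)[OF P(1)] by blast
qed

lemma semiprime_separated_by_LgSpec:
  assumes proj: "proj_sigma R M" and sp: "semiprime_in R M N"
    and x: "x \<in> carrier M" "x \<notin> N"
  obtains P where "P \<in> LgSpec R M" "N \<subseteq> P" "x \<notin> P"
proof -
  obtain xs where xs: "xs 0 = x" "\<And>i. xs i \<in> carrier M" "\<And>i. xs i \<notin> N"
    "\<And>i. xs (Suc i) \<in> mprod R M (fi_gen R M (xs i)) (fi_gen R M (xs i))"
    using semiprime_square_sequence[OF sp x] by blast
  have N: "N \<in> fi_submods R M"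
    using sp by (simp add: semiprime_in_def)
  obtain P where P: "P \<in> fi_submods R M" "N \<subseteq> P" "P \<inter> range xs = {}"
    and P_max: "\<And>Q. Q \<in> fi_submods R M \<Longrightarrow> P \<subseteq> Q \<Longrightarrow> Q \<inter> range xs = {} \<Longrightarrow> Q = P"
    using maximal_fi_avoiding[OF N, of "range xs"] xs(3) by blast
  have "P \<in> LgSpec R M"
  proof (rule square_sequence_maximal_LgSpec[of xs P, OF proj xs(2,4) P(1)])
    show "xs i \<notin> P" for i
      using P(3) by blast
    show "Q = P" if "Q \<in> fi_submods R M" "P \<subseteq> Q" "\<And>i. xs i \<notin> Q" for Q
      using P_max[OF that(1,2)] that(3) by blast
  qed
  then show thesis
    using that P(2,3) xs(1) by blast
qed

lemma Uopen_subset_if_square_subset: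
  assumes K: "K \<in> fi_submods R M" and KK: "mprod R M K K \<subseteq> N"
  shows "Uopen R M K \<subseteq> Uopen R M N"
  using K KK unfolding Uopen_def LgSpec_def by blast

lemma semiprime_Uopen_subset:
  assumes proj: "proj_sigma R M" and sp: "semiprime_in R M N"
    and K: "K \<in> fi_submods R M" and KN: "Uopen R M K \<subseteq> Uopen R M N"
  shows "K \<subseteq> N"
proof
  fix x assume x: "x \<in> K"
  show "x \<in> N"
  proof (rule ccontr)
    assume "x \<notin> N"
    then obtain P where "P \<in> LgSpec R M" "N \<subseteq> P" "x \<notin> P"
      using semiprime_separated_by_LgSpec[OF proj sp] x fi_submods_carrier[OF K] by blast
    then show False
      using KN x by (auto simp: Uopen_def)
  qed
qed

lemma mu_upper: "K \<in> fi_submods R M \<Longrightarrow> Uopen R M K \<subseteq> Uopen R M N \<Longrightarrow> K \<subseteq> mu R M N"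
proof -
  assume "K \<in> fi_submods R M" "Uopen R M K \<subseteq> Uopen R M N"
  then have "K \<subseteq> \<Union>{K \<in> fi_submods R M. Uopen R M K \<subseteq> Uopen R M N}"
    by blast
  then show ?thesis
    unfolding mu_def using gen_submod_upper by (rule subset_trans)
qed

lemma mu_least:
  "submod R M Q \<Longrightarrow> (\<And>K. K \<in> fi_submods R M \<Longrightarrow> Uopen R M K \<subseteq> Uopen R M N \<Longrightarrow> K \<subseteq> Q)
   \<Longrightarrow> mu R M N \<subseteq> Q"
  unfolding mu_def by (rule gen_submod_least) auto

end

theorem proposition4p24:
  fixes R :: "'r ring" and M :: "('r, 'a) module" and N :: "'a set"
  assumes "lmodule R M"
    and "proj_sigma R M"
    and "N \<in> fi_submods R M"
  shows "mu R M N = N \<longleftrightarrow> (semiprime_in R M N \<or> N = carrier M)"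
proof -
  interpret lmod R M
    by (rule lmod.intro) (rule assms(1))
  have N_mu: "N \<subseteq> mu R M N"
    using mu_upper[OF assms(3)] by blast
  show ?thesis
  proof
    assume "mu R M N = N"
    then have "K \<subseteq> N" if "K \<in> fi_submods R M" "mprod R M K K \<subseteq> N" for K
      using mu_upper[OF that(1) Uopen_subset_if_square_subset[OF that]] by simp
    then show "semiprime_in R M N \<or> N = carrier M"
      using assms(3) by (auto simp: semiprime_in_def)
  next
    assume "semiprime_in R M N \<or> N = carrier M"
    then have "mu R M N \<subseteq> N"
    proof
      assume "semiprime_in R M N"
      then show ?thesis
        using mu_least[OF fi_submodsD(1)[OF assms(3)]] semiprime_Uopen_subset[OF assms(2)] by blast
    next
      assume "N = carrier M"
      then show ?thesis
        using mu_least[OF submod_carrier] fi_submods_carrier by blast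
    qed
    then show "mu R M N = N"
      using N_mu by blast
  qed
qed

end
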